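(* Let $m\geq1$ and let $T$ be a $B$-tree of order $2m+1$ with $n$ keys and height at least $1$, with $n_1$ keys not stored in leaves. For $\pi\in S_n$ producing a history of $T$, let $\pi^{(1)}\in S_{n_1}$ be defined as below. If $\pi,\pi'\in S_n$ produce the same history $(T_1,\dots,T_n=T)$, then $\pi^{(1)}=\pi'^{(1)}$. Consequently there is a well-defined map $\hat\Psi_T$ from the set of histories of $T$ to the set of permutations producing $T^{(1)}$, assigning to a history the permutation $\pi^{(1)}$ for any $\pi$ producing it.
   Context: A $B$-tree of order $2m+1$ is a rooted plane search tree whose nodes contain pairwise distinct keys in increasing left-to-right order (a non-leaf node with $k$ keys has $k+1$ children, the $i$-th child's subtree containing keys between the $(i-1)$-th and $i$-th key), every non-root node has between $m$ and $2m$ keys, the root between $1$ and $2m$, and all leaves have equal depth. Insertion: place the new key in the appropriate leaf; whenever a node has $2m+1$ keys, split it, moving the median key up into the parent and forming two nodes from the $m$ smallest and the $m$ largest keys (creating a new one-key root if the root splits). A permutation $\pi\in S_n$ used as key sequence means inserting $\pi(1),\dots,\pi(n)$ successively starting from the empty tree; it produces the history $(T_1,\dots,T_n)$, where $T_i$ is the tree after $i$ insertions, considered up to isomorphism of rooted plane trees (shape and number of keys per node). $T^{(1)}$ is the tree obtained from $T$ by deleting all leaves. Given $\pi$ producing a history of $T$: let $i_1<\dots<i_{n_1}$ be the times $i$ at which inserting $\pi(i)$ causes the leaf receiving it to split, and $K_{i_j}$ the median key of that leaf (the key moved out of the leaf into its parent at time $i_j$); $\pi^{(1)}\in S_{n_1}$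 is the permutation order-isomorphic to $(K_{i_1},\dots,K_{i_{n_1}})$, i.e. $\pi^{(1)}(a)<\pi^{(1)}(b)$ iff $K_{i_a}<K_{i_b}$. *)

theory Defs
  imports Main
begin

text \<open>B-tree nodes: list of keys (increasing) and list of children (empty for a leaf).
  The empty tree is represented by the key-less leaf Node [] [].\<close>
datatype btree = Node "nat list" "btree list"

text \<open>Shape of a tree: rooted plane tree with number of keys per node
  (this is the tree up to isomorphism).\<close>
datatype shp = SNode nat "shp list"

fun shape :: "btree \<Rightarrow> shp" where
  "shape (Node ks cs) = SNode (length ks) (map shape cs)"

fun is_leaf :: "btree \<Rightarrow> bool" where
  "is_leaf (Node ks cs) = (cs = [])"

fun height :: "btree \<Rightarrow> nat" where
  "height (Node ks cs) = (if cs = [] then 0 else Suc (Max (set (map height cs))))"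

fun prune :: "btree \<Rightarrow> btree" where
  "prune (Node ks cs) = Node ks (map prune (filter (\<lambda>c. \<not> is_leaf c) cs))"

datatype ires = Fit btree | Split btree nat btree

definition split_node :: "nat \<Rightarrow> nat list \<Rightarrow> btree list \<Rightarrow> ires" where
  "split_node m ks cs =
     (if length ks \<le> 2 * m then Fit (Node ks cs)
      else Split (Node (take m ks) (take (Suc m) cs)) (ks ! m)
                 (Node (drop (Suc m) ks) (drop (Suc m) cs)))"

text \<open>Insertion into a subtree; second component: the median key of the
  receiving leaf if that leaf splits.\<close>
function ins :: "nat \<Rightarrow> nat \<Rightarrow> btree \<Rightarrow> ires \<times> nat option" where
  "ins m x (Node ks cs) =
     (if cs = [] then
        (let ks' = insort x ks in
           (split_node m ks' [], if length ks' > 2 * m then Some (ks' ! m) else None))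
      else
        (let i = min (length (filter (\<lambda>k. k < x) ks)) (length cs - 1) in
           (case ins m x (cs ! i) of
              (Fit c, med) \<Rightarrow> (Fit (Node ks (cs[i := c])), med)
            | (Split l k r, med) \<Rightarrow>
                (split_node m (take i ks @ k # drop i ks)
                              (take i cs @ l # r # drop (Suc i) cs), med))))"
  by pat_completeness auto
termination
  apply (relation "measure (\<lambda>(m, x, t). size t)")
   apply simp
  apply (simp add: Let_def)
  by (metis diff_less length_greater_0_conv less_numeral_extra(1) min_less_iff_disj
      nth_mem size_list_estimation' order_refl less_Suc_eq_le)

definition insert_key :: "nat \<Rightarrow> nat \<Rightarrow> btree \<Rightarrow> btree \<times> nat option" where
  "insert_key m x t =
     (case ins m x t of
        (Fit t', med) \<Rightarrow> (t', med)
      | (Split l k r, med) \<Rightarrow> (Node [k] [l, r], med))"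

fun steps :: "nat \<Rightarrow> btree \<Rightarrow> nat list \<Rightarrow> (btree \<times> nat option) list" where
  "steps m t [] = []"
| "steps m t (x # xs) =
     (let (t', med) = insert_key m x t in (t', med) # steps m t' xs)"

definition final_tree :: "nat \<Rightarrow> nat list \<Rightarrow> btree" where
  "final_tree m p = foldl (\<lambda>t x. fst (insert_key m x t)) (Node [] []) p"

text \<open>History (T_1,...,T_n) up to isomorphism.\<close>
definition history :: "nat \<Rightarrow> nat list \<Rightarrow> shp list" where
  "history m p = map (shape \<circ> fst) (steps m (Node [] []) p)"

text \<open>Medians K_{i_1},...,K_{i_{n_1}} of the splitting leaves, in time order.\<close>
definition leaf_medians :: "nat \<Rightarrow> nat list \<Rightarrow> nat list" where
  "leaf_medians m p = List.map_filter snd (steps m (Node [] []) p)"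

text \<open>Standardisation: the order-isomorphic permutation of {1..length xs}.\<close>
definition std :: "nat list \<Rightarrow> nat list" where
  "std xs = map (\<lambda>x. card {y \<in> set xs. y \<le> x}) xs"

definition pi1 :: "nat \<Rightarrow> nat list \<Rightarrow> nat list" where
  "pi1 m p = std (leaf_medians m p)"

text \<open>A permutation in S_n, as the list (pi(1),...,pi(n)).\<close>
definition is_perm :: "nat \<Rightarrow> nat list \<Rightarrow> bool" where
  "is_perm n p \<longleftrightarrow> distinct p \<and> set p = {1..n}"

end

theory Submission
  imports Defs "HOL-Library.Sublist"
begin

text \<open>
  If the receiving leaf does not split,
  the internal keys and the number of leaves stay the same.  If it splits and it is the j-th leaf
  from the left, the median becomes the j-th internal key in symmetric order and the sequence of
  leaf sizes changes exactly at position j, from 2m to m, m.  The leaf sizes are read off the shape,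
  and for m \<ge> 1 the position j is recovered from them, so a history fixes at every split the rank
  of the new median among the internal keys present at that time; hence the medians of two
  permutations with the same history are order-isomorphic.

  Moreover, for a tree of height at least one, deleting the leaves commutes with insertion: an
  insertion without leaf split does not change T^(1), and one with a leaf split acts on T^(1) as
  the insertion of the median.  So T^(1) is built by inserting the medians in order, and inserting
  the order-isomorphic sequence \<pi>^(1) instead gives a tree of the same shape.
\<close>

fun interleave :: "'a list list \<Rightarrow> 'a list \<Rightarrow> 'a list" where
  "interleave [] K = []"
| "interleave (x # X) [] = x"
| "interleave (x # X) (k # K) = x @ k # interleave X K"

lemma length_interleave:
  "length X = Suc (length K) \<Longrightarrow> length (interleave X K) = sum_list (map length X) + length K"
  by (induction X K rule: interleave.induct) auto

lemma set_interleave: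
  "length X = Suc (length K) \<Longrightarrow> set (interleave X K) = \<Union> (set ` set X) \<union> set K"
  by (induction X K rule: interleave.induct) auto

lemma interleave_split_at:
  "j < length K \<Longrightarrow> length X = Suc (length K) \<Longrightarrow>
   interleave X K = interleave (take (Suc j) X) (take j K) @ K ! j # interleave (drop (Suc j) X) (drop (Suc j) K)"
proof (induction j arbitrary: X K)
  case 0
  then show ?case by (cases X; cases K) auto
next
  case (Suc j)
  then show ?case by (cases X; cases K) auto
qed

lemma interleave_splice:
  "i < length X \<Longrightarrow> length X = Suc (length K) \<Longrightarrow>
   interleave (take i X @ a # b # drop (Suc i) X) (take i K @ k # drop i K) = interleave (X[i := a @ k # b]) K"
proof (induction i arbitrary: X K)
  case 0
  then show ?case by (cases X; cases K; cases "tl X") auto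
next
  case (Suc i)
  then show ?case by (cases X; cases K) auto
qed

lemma interleave_update_eq:
  "i < length X \<Longrightarrow> length X = Suc (length K) \<Longrightarrow>
   \<exists>P Q. (\<forall>Y. interleave (X[i := Y]) K = P @ Y @ Q) \<and> length P = sum_list (map length (take i X)) + i"
proof (induction i arbitrary: X K)
  case 0
  then obtain x X' where X: "X = x # X'" by (cases X) auto
  show ?case
  proof (cases K)
    case Nil
    then show ?thesis using X by (intro exI[of _ "[]"]) auto
  next
    case (Cons k K')
    then show ?thesis using X by (intro exI[of _ "[]"] exI[of _ "k # interleave X' K'"]) auto
  qed
next
  case (Suc i)
  then obtain x X' k K' where X: "X = x # X'" and K: "K = k # K'" by (cases X; cases K) auto
  obtain P Q where "\<forall>Y. interleave (X'[i := Y]) K' = P @ Y @ Q"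
    and "length P = sum_list (map length (take i X')) + i"
    using Suc.IH[of X' K'] Suc.prems X K by auto
  then show ?case using X K by (intro exI[of _ "x @ k # P"] exI[of _ Q]) auto
qed

lemma sorted_wrt_interleave:
  "sorted_wrt R (interleave X K) \<Longrightarrow> length X = Suc (length K) \<Longrightarrow>
   sorted_wrt R K \<and> (\<forall>x\<in>set X. sorted_wrt R x)"
  by (induction X K rule: interleave.induct) (auto simp: sorted_wrt_append set_interleave)

lemma subseq_interleave_mono: "list_all2 subseq X Y \<Longrightarrow> subseq (interleave X K) (interleave Y K)"
proof (induction X K arbitrary: Y rule: interleave.induct)
  case (2 x X)
  then show ?case by (cases Y) auto
next
  case (3 x X k K)
  then show ?case by (cases Y) (auto intro: list_emb_append_mono)
qed simp

lemma sorted_wrt_subseq: "subseq xs ys \<Longrightarrow> sorted_wrt P ys \<Longrightarrow> sorted_wrt P xs"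
  by (induction rule: list_emb.induct) (auto dest: list_emb_set)

lemma length_filter_less_interleave:
  fixes K :: "'a::linorder list"
  assumes "sorted_wrt (<) (interleave X K)" "length X = Suc (length K)" "i < length X" "y \<in> set (X ! i)"
  shows "length (filter (\<lambda>k. k < y) K) = i"
  using assms
proof (induction X K arbitrary: i rule: interleave.induct)
  case (3 x X k K)
  have sorted: "sorted_wrt (<) (x @ k # interleave X K)" using "3.prems" by simp
  show ?case
  proof (cases i)
    case 0
    then have "y < k" "\<forall>z\<in>set K. k < z"
      using sorted "3.prems" by (auto simp: sorted_wrt_append set_interleave)
    then show ?thesis using 0 by (auto simp: filter_empty_conv)
  next
    case (Suc i')
    then have "X ! i' \<in> set X" using "3.prems" by simp
    then have "y \<in> set (interleave X K)" using "3.prems" Suc by (auto simp: set_interleave)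
    then have "k < y" using sorted by (simp add: sorted_wrt_append)
    moreover have "length (filter (\<lambda>k. k < y) K) = i'"
      using "3.IH" "3.prems" sorted Suc by (auto simp: sorted_wrt_append)
    ultimately show ?thesis using Suc by simp
  qed
qed auto

lemma concat_take_nth_drop:
  "i < length X \<Longrightarrow> concat X = concat (take i X) @ X ! i @ concat (drop (Suc i) X)"
  by (metis append_take_drop_id concat.simps(2) concat_append Cons_nth_drop_Suc)

lemma insort_append_less: "\<forall>a\<in>set A. a < y \<Longrightarrow> insort y (A @ B) = A @ insort y B"
  by (induction A) auto

lemma insort_append_le: "B = [] \<or> y \<le> hd B \<Longrightarrow> insort y (A @ B) = insort y A @ B"
  by (induction A) (cases B, auto)+

lemma interleave_insort:
  fixes K :: "'a::linorder list"
  assumes "sorted_wrt (<) (interleave X K)" "length X = Suc (length K)"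
    and "i = length (filter (\<lambda>k. k < y) K)"
  shows "interleave (X[i := insort y (X ! i)]) K = insort y (interleave X K)"
  using assms
proof (induction X K arbitrary: i rule: interleave.induct)
  case (3 x X k K)
  have sorted: "sorted_wrt (<) (x @ k # interleave X K)" using "3.prems" by simp
  show ?case
  proof (cases "k < y")
    case False
    moreover have "\<forall>z\<in>set K. k < z" using sorted "3.prems" by (auto simp: sorted_wrt_append set_interleave)
    ultimately have "i = 0" using "3.prems" by (auto simp: filter_empty_conv)
    then show ?thesis using False by (simp add: insort_append_le)
  next
    case True
    then have "\<forall>a\<in>set (x @ [k]). a < y" using sorted by (auto simp: sorted_wrt_append)
    then have "insort y (x @ k # interleave X K) = x @ k # insort y (interleave X K)"
      using insort_append_less[of "x @ [k]" y] by simp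
    then show ?thesis using "3.IH"[of "i - 1"] "3.prems" True sorted by (auto simp: sorted_wrt_append)
  qed
qed auto

fun inorder :: "btree \<Rightarrow> nat list" where
  "inorder (Node ks cs) = (if cs = [] then ks else interleave (map inorder cs) ks)"

fun inner_keys :: "btree \<Rightarrow> nat list" where
  "inner_keys (Node ks cs) = (if cs = [] then [] else interleave (map inner_keys cs) ks)"

text \<open>Defined on shapes, so the leaf sizes of every tree in a history are determined by it.\<close>

fun leaf_sizes :: "shp \<Rightarrow> nat list" where
  "leaf_sizes (SNode n cs) = (if cs = [] then [n] else concat (map leaf_sizes cs))"

fun wf_btree :: "nat \<Rightarrow> btree \<Rightarrow> bool" where
  "wf_btree m (Node ks cs) =
     (if cs = [] then length ks \<le> 2 * m
      else length cs = Suc (length ks) \<and> (\<forall>c\<in>set cs. wf_btree m c))"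

fun balanced :: "nat \<Rightarrow> btree \<Rightarrow> bool" where
  "balanced 0 (Node ks cs) = (cs = [])"
| "balanced (Suc h) (Node ks cs) = (cs \<noteq> [] \<and> (\<forall>c\<in>set cs. balanced h c))"

fun ires_tree :: "ires \<Rightarrow> btree" where
  "ires_tree (Fit t) = t"
| "ires_tree (Split l k r) = Node [k] [l, r]"

fun ires_all :: "(btree \<Rightarrow> bool) \<Rightarrow> ires \<Rightarrow> bool" where
  "ires_all P (Fit t) = P t"
| "ires_all P (Split l k r) = (P l \<and> P r)"

definition graft :: "nat \<Rightarrow> nat list \<Rightarrow> btree list \<Rightarrow> nat \<Rightarrow> ires \<Rightarrow> ires" where
  "graft m ks cs i r =
     (case r of
        Fit c \<Rightarrow> Fit (Node ks (cs[i := c]))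
      | Split l k r \<Rightarrow> split_node m (take i ks @ k # drop i ks) (take i cs @ l # r # drop (Suc i) cs))"

lemma ins_Leaf:
  "ins m x (Node ks []) =
     (split_node m (insort x ks) [], if 2 * m < length (insort x ks) then Some (insort x ks ! m) else None)"
  by (simp add: ins.simps Let_def)

lemma ins_Node:
  assumes "length cs = Suc (length ks)" and i_def: "i = length (filter (\<lambda>k. k < x) ks)"
  shows "ins m x (Node ks cs) = (graft m ks cs i (fst (ins m x (cs ! i))), snd (ins m x (cs ! i)))"
proof -
  have "cs \<noteq> []" "min i (length cs - 1) = i"
    using assms length_filter_le[of _ ks] by (auto simp: min_def)
  then show ?thesis
    by (subst ins.simps) (auto simp: Let_def graft_def i_def split: prod.split ires.split)
qed

lemma child_index_less:
  "length cs = Suc (length ks) \<Longrightarrow> length (filter P ks) < length cs"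
  using length_filter_le[of P ks] by (simp add: less_Suc_eq_le)

declare ins.simps [simp del]

lemma insert_key_eq: "insert_key m x t = (ires_tree (fst (ins m x t)), snd (ins m x t))"
  by (simp add: insert_key_def split: prod.split ires.split)

lemma steps_Cons: "steps m t (x # xs) = insert_key m x t # steps m (fst (insert_key m x t)) xs"
  by (simp add: split_beta)

declare steps.simps(2) [simp del]

lemma ires_all_split_node:
  assumes "length cs = Suc (length ks)" "\<forall>c\<in>set cs. P c"
    and node: "\<And>ks cs. length cs = Suc (length ks) \<Longrightarrow> \<forall>c\<in>set cs. P c \<Longrightarrow> Q (Node ks cs)"
  shows "ires_all Q (split_node m ks cs)"
  using assms(1,2) by (auto simp: split_node_def intro!: node dest: in_set_takeD in_set_dropD)

lemma ires_all_graft: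
  assumes "i < length cs" "length cs = Suc (length ks)" "\<forall>c\<in>set cs. P c" "ires_all P r"
    and node: "\<And>ks cs. length cs = Suc (length ks) \<Longrightarrow> \<forall>c\<in>set cs. P c \<Longrightarrow> Q (Node ks cs)"
  shows "ires_all Q (graft m ks cs i r)"
proof (cases r)
  case (Fit c)
  then show ?thesis using assms by (auto simp: graft_def intro!: node dest: set_update_subset_insert[THEN subsetD])
next
  case (Split l k r')
  then show ?thesis using assms
    by (auto simp: graft_def intro!: ires_all_split_node[where P = P] node
        dest!: in_set_takeD in_set_dropD)
qed

lemma ins_wf_btree: "wf_btree m t \<Longrightarrow> ires_all (wf_btree m) (fst (ins m x t))"
proof (induction t arbitrary: x)
  case (Node ks cs)
  show ?case
  proof (cases "cs = []")
    case True
    then show ?thesis using Node.prems by (auto simp: ins_Leaf split_node_def)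
  next
    case False
    let ?i = "length (filter (\<lambda>k. k < x) ks)"
    have len: "length cs = Suc (length ks)" and "\<forall>c\<in>set cs. wf_btree m c"
      using Node.prems False by auto
    moreover have "?i < length cs" using len by (rule child_index_less)
    ultimately show ?thesis
      unfolding ins_Node[OF len refl] using Node.IH
      by (auto intro!: ires_all_graft[where P = "wf_btree m"])
  qed
qed

lemma ins_balanced: "wf_btree m t \<Longrightarrow> balanced h t \<Longrightarrow> ires_all (balanced h) (fst (ins m x t))"
proof (induction t arbitrary: x h)
  case (Node ks cs)
  show ?case
  proof (cases "cs = []")
    case True
    then show ?thesis using Node.prems by (cases h) (auto simp: ins_Leaf split_node_def)
  next
    case False
    then obtain h' where h: "h = Suc h'" using Node.prems by (cases h) auto
    let ?i = "length (filter (\<lambda>k. k < x) ks)"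
    have len: "length cs = Suc (length ks)" and "\<forall>c\<in>set cs. wf_btree m c \<and> balanced h' c"
      using Node.prems False h by auto
    moreover have "?i < length cs" using len by (rule child_index_less)
    ultimately show ?thesis
      unfolding ins_Node[OF len refl] h using Node.IH
      by (auto intro!: ires_all_graft[where P = "balanced h'"])
  qed
qed

lemma wf_btree_insert_key: "wf_btree m t \<Longrightarrow> wf_btree m (fst (insert_key m x t))"
  using ins_wf_btree[of m t x] by (cases "fst (ins m x t)") (auto simp: insert_key_eq)

lemma balanced_insert_key: "wf_btree m t \<Longrightarrow> balanced h t \<Longrightarrow> \<exists>h'. balanced h' (fst (insert_key m x t))"
  using ins_balanced[of m t h x] by (cases "fst (ins m x t)") (auto simp: insert_key_eq intro: exI[of _ "Suc h"])

lemma interleave_view_split_node: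
  assumes V: "\<And>ks cs. cs \<noteq> [] \<Longrightarrow> V (Node ks cs) = interleave (map V cs) ks"
    and len: "length cs = Suc (length ks)"
  shows "V (ires_tree (split_node m ks cs)) = interleave (map V cs) ks"
proof (cases "length ks \<le> 2 * m")
  case False
  then have "take (Suc m) cs \<noteq> []" "drop (Suc m) cs \<noteq> []" "m < length ks" using len by auto
  then show ?thesis using False len interleave_split_at[of m ks "map V cs"]
    by (simp add: split_node_def V take_map drop_map)
next
  case True
  have "cs \<noteq> []" using len by auto
  then show ?thesis using True by (simp add: split_node_def V)
qed

lemma interleave_view_graft:
  assumes V: "\<And>ks cs. cs \<noteq> [] \<Longrightarrow> V (Node ks cs) = interleave (map V cs) ks"
    and "i < length cs" "length cs = Suc (length ks)"
  shows "V (ires_tree (graft m ks cs i r)) = interleave ((map V cs)[i := V (ires_tree r)]) ks"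
proof (cases r)
  case (Fit c)
  have "cs[i := c] \<noteq> []" using assms by auto
  then show ?thesis using Fit by (simp add: graft_def V map_update)
next
  case (Split l k r')
  have "V (ires_tree (graft m ks cs i r)) =
        interleave (map V (take i cs @ l # r' # drop (Suc i) cs)) (take i ks @ k # drop i ks)"
    using Split assms by (simp add: graft_def interleave_view_split_node[OF V])
  also have "\<dots> = interleave ((map V cs)[i := V l @ k # V r']) ks"
    using interleave_splice[of i "map V cs" ks] assms by (simp add: take_map drop_map)
  finally show ?thesis using Split by (simp add: V)
qed

lemma inorder_Node: "cs \<noteq> [] \<Longrightarrow> inorder (Node ks cs) = interleave (map inorder cs) ks"
  by simp

lemma inner_keys_Node: "cs \<noteq> [] \<Longrightarrow> inner_keys (Node ks cs) = interleave (map inner_keys cs) ks"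
  by simp

lemmas inorder_graft = interleave_view_graft[where V = inorder, OF inorder_Node]
  and inner_keys_graft = interleave_view_graft[where V = inner_keys, OF inner_keys_Node]

lemma inorder_split_node_Nil: "inorder (ires_tree (split_node m ks [])) = ks"
  by (auto simp: split_node_def intro: id_take_nth_drop[symmetric])

lemma leaf_sizes_split_node:
  "length cs = Suc (length ks) \<Longrightarrow>
   leaf_sizes (shape (ires_tree (split_node m ks cs))) = concat (map (\<lambda>c. leaf_sizes (shape c)) cs)"
  by (auto simp: split_node_def comp_def simp flip: concat_append map_append)

lemma leaf_sizes_graft:
  assumes "i < length cs" "length cs = Suc (length ks)"
  shows "leaf_sizes (shape (ires_tree (graft m ks cs i r))) =
         concat ((map (\<lambda>c. leaf_sizes (shape c)) cs)[i := leaf_sizes (shape (ires_tree r))])"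
  using assms
  by (cases r) (auto simp: graft_def leaf_sizes_split_node comp_def upd_conv_take_nth_drop map_update
      take_map drop_map)

lemma inorder_ins:
  "wf_btree m t \<Longrightarrow> sorted_wrt (<) (inorder t) \<Longrightarrow>
   inorder (ires_tree (fst (ins m x t))) = insort x (inorder t)"
proof (induction t arbitrary: x)
  case (Node ks cs)
  show ?case
  proof (cases "cs = []")
    case True
    then show ?thesis by (simp add: ins_Leaf inorder_split_node_Nil)
  next
    case False
    define i where "i = length (filter (\<lambda>k. k < x) ks)"
    have len: "length cs = Suc (length ks)" and wf: "\<forall>c\<in>set cs. wf_btree m c"
      using Node.prems False by auto
    have i: "i < length cs" unfolding i_def using len by (rule child_index_less)
    have sorted: "sorted_wrt (<) (interleave (map inorder cs) ks)" using Node.prems False by simp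
    then have "sorted_wrt (<) (inorder (cs ! i))" using sorted_wrt_interleave[OF sorted] len i by simp
    then have "inorder (ires_tree (fst (ins m x (cs ! i)))) = insort x (inorder (cs ! i))"
      using Node.IH i wf by simp
    then show ?thesis
      using interleave_insort[OF sorted _ i_def] False len i
      by (simp add: ins_Node[OF len i_def] inorder_graft)
  qed
qed

lemma set_inorder_ins:
  "wf_btree m t \<Longrightarrow> set (inorder (ires_tree (fst (ins m x t)))) \<subseteq> insert x (set (inorder t))"
proof (induction t arbitrary: x)
  case (Node ks cs)
  show ?case
  proof (cases "cs = []")
    case True
    then show ?thesis by (simp add: ins_Leaf inorder_split_node_Nil set_insort_key)
  next
    case False
    define i where "i = length (filter (\<lambda>k. k < x) ks)"
    have len: "length cs = Suc (length ks)" and wf: "\<forall>c\<in>set cs. wf_btree m c"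
      using Node.prems False by auto
    have i: "i < length cs" unfolding i_def using len by (rule child_index_less)
    have "set (inorder (ires_tree (fst (ins m x (cs ! i))))) \<subseteq> insert x (set (inorder (cs ! i)))"
      using Node.IH i wf by simp
    moreover have "cs ! i \<in> set cs" using i by simp
    ultimately show ?thesis
      using False len i
      by (fastforce simp: ins_Node[OF len i_def] inorder_graft set_interleave
          dest!: set_update_subset_insert[THEN subsetD])
  qed
qed

lemma median_mem_ins:
  "wf_btree m t \<Longrightarrow> snd (ins m x t) = Some k \<Longrightarrow> k \<in> insert x (set (inorder t))"
proof (induction t arbitrary: x)
  case (Node ks cs)
  show ?case
  proof (cases "cs = []")
    case True
    then have "k \<in> set (insort x ks)" using Node.prems by (auto simp: ins_Leaf split: if_splits)
    then show ?thesis using True by (simp add: set_insort_key)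
  next
    case False
    define i where "i = length (filter (\<lambda>k. k < x) ks)"
    have len: "length cs = Suc (length ks)" and wf: "\<forall>c\<in>set cs. wf_btree m c"
      using Node.prems False by auto
    have i: "i < length cs" unfolding i_def using len by (rule child_index_less)
    have "k \<in> insert x (set (inorder (cs ! i)))"
      using Node.IH i wf Node.prems(2) by (simp add: ins_Node[OF len i_def])
    then show ?thesis using False len i by (auto simp: set_interleave)
  qed
qed

lemma insert_key_invariants:
  assumes "wf_btree m t" "sorted_wrt (<) (inorder t)" "x \<notin> set (inorder t)"
  shows "wf_btree m (fst (insert_key m x t))"
    and "inorder (fst (insert_key m x t)) = insort x (inorder t)"
    and "sorted_wrt (<) (inorder (fst (insert_key m x t)))"
  using assms wf_btree_insert_key[OF assms(1)] inorder_ins[OF assms(1,2)]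
  by (simp_all add: insert_key_eq strict_sorted_iff sorted_insort distinct_insort)

lemma leaf_count: "wf_btree m t \<Longrightarrow> length (leaf_sizes (shape t)) = Suc (length (inner_keys t))"
proof (induction t)
  case (Node ks cs)
  show ?case
  proof (cases "cs = []")
    case False
    then have "length (leaf_sizes (shape (Node ks cs))) = (\<Sum>c\<leftarrow>cs. Suc (length (inner_keys c)))"
      using Node by (simp add: length_concat comp_def cong: map_cong)
    also have "\<dots> = sum_list (map length (map inner_keys cs)) + length cs"
      by (simp add: sum_list_Suc comp_def)
    finally show ?thesis using Node.prems False by (simp add: length_interleave)
  qed simp
qed

lemma ins_no_leaf_split:
  "wf_btree m t \<Longrightarrow> snd (ins m x t) = None \<Longrightarrow>
   \<exists>t'. fst (ins m x t) = Fit t' \<and> inner_keys t' = inner_keys t \<and>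
        length (leaf_sizes (shape t')) = length (leaf_sizes (shape t))"
proof (induction t arbitrary: x)
  case (Node ks cs)
  show ?case
  proof (cases "cs = []")
    case True
    then show ?thesis using Node.prems by (auto simp: ins_Leaf split_node_def split: if_splits)
  next
    case False
    define i where "i = length (filter (\<lambda>k. k < x) ks)"
    have len: "length cs = Suc (length ks)" and wf: "\<forall>c\<in>set cs. wf_btree m c"
      using Node.prems False by auto
    have i: "i < length cs" unfolding i_def using len by (rule child_index_less)
    obtain c' where c': "fst (ins m x (cs ! i)) = Fit c'" "inner_keys c' = inner_keys (cs ! i)"
      "length (leaf_sizes (shape c')) = length (leaf_sizes (shape (cs ! i)))"
      using Node.IH[of "cs ! i" x] Node.prems(2) i wf by (auto simp: ins_Node[OF len i_def])
    have "map inner_keys (cs[i := c']) = map inner_keys cs"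
      using c'(2) i by (metis list_update_id map_update nth_map)
    moreover have "map (\<lambda>c. length (leaf_sizes (shape c))) (cs[i := c']) =
                   map (\<lambda>c. length (leaf_sizes (shape c))) cs"
      using c'(3) i by (metis (no_types, lifting) list_update_id map_update nth_map)
    ultimately show ?thesis
      using c'(1) False by (simp add: ins_Node[OF len i_def] graft_def length_concat comp_def)
  qed
qed

lemma length_concat_take_leaf_sizes:
  assumes "\<forall>c\<in>set cs. wf_btree m c"
  shows "length (concat (take i (map (\<lambda>c. leaf_sizes (shape c)) cs))) =
         sum_list (map length (take i (map inner_keys cs))) + length (take i cs)"
proof -
  have "\<forall>c\<in>set (take i cs). length (leaf_sizes (shape c)) = Suc (length (inner_keys c))"
    using assms leaf_count by (blast dest: in_set_takeD)
  then show ?thesis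
    by (simp add: length_concat take_map comp_def sum_list_Suc cong: map_cong)
qed

lemma ins_leaf_split:
  assumes "wf_btree m t" "snd (ins m x t) = Some k"
  shows "\<exists>j < length (leaf_sizes (shape t)). leaf_sizes (shape t) ! j = 2 * m \<and>
    leaf_sizes (shape (ires_tree (fst (ins m x t)))) =
      take j (leaf_sizes (shape t)) @ m # m # drop (Suc j) (leaf_sizes (shape t)) \<and>
    inner_keys (ires_tree (fst (ins m x t))) = take j (inner_keys t) @ k # drop j (inner_keys t)"
  using assms
proof (induction t arbitrary: x)
  case (Node ks cs)
  let ?L = "\<lambda>t. leaf_sizes (shape t)"
  show ?case
  proof (cases "cs = []")
    case True
    then show ?thesis using Node.prems by (auto simp: ins_Leaf split_node_def split: if_splits)
  next
    case False
    define i where "i = length (filter (\<lambda>k. k < x) ks)"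
    have len: "length cs = Suc (length ks)" and wf: "\<forall>c\<in>set cs. wf_btree m c"
      using Node.prems False by auto
    have i: "i < length cs" unfolding i_def using len by (rule child_index_less)
    let ?r = "fst (ins m x (cs ! i))"
    obtain jc where jc: "jc < length (?L (cs ! i))" "?L (cs ! i) ! jc = 2 * m"
      "?L (ires_tree ?r) = take jc (?L (cs ! i)) @ m # m # drop (Suc jc) (?L (cs ! i))"
      "inner_keys (ires_tree ?r) = take jc (inner_keys (cs ! i)) @ k # drop jc (inner_keys (cs ! i))"
      using Node.IH[of "cs ! i" x] Node.prems(2) i wf by (auto simp: ins_Node[OF len i_def])
    obtain P Q where PQ: "\<forall>Y. interleave ((map inner_keys cs)[i := Y]) ks = P @ Y @ Q"
      "length P = sum_list (map length (take i (map inner_keys cs))) + i"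
      using interleave_update_eq[of i "map inner_keys cs" ks] i len by auto
    have "(map inner_keys cs)[i := inner_keys (cs ! i)] = map inner_keys cs"
      using i by (metis list_update_id nth_map)
    then have ik: "inner_keys (Node ks cs) = P @ inner_keys (cs ! i) @ Q"
      using PQ(1)[rule_format, of "inner_keys (cs ! i)"] False by simp
    define A where "A = concat (take i (map ?L cs))"
    define B where "B = concat (drop (Suc i) (map ?L cs))"
    have L: "?L (Node ks cs) = A @ ?L (cs ! i) @ B"
      using concat_take_nth_drop[of i "map ?L cs"] i False by (simp add: A_def B_def comp_def)
    \<comment> \<open>Before subtree i there is one leaf more than internal keys, counting the separators in ks,
      so the position of the split leaf among the leaves equals that of the median among the keys.\<close>
    have A: "length A = length P"
      using length_concat_take_leaf_sizes[OF wf, of i] PQ(2) i by (simp add: A_def take_map)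
    have jc_le: "jc \<le> length (inner_keys (cs ! i))"
      using jc(1) leaf_count[of m "cs ! i"] wf i by simp
    show ?thesis
    proof (intro exI[of _ "length P + jc"] conjI)
      show "length P + jc < length (?L (Node ks cs))" using L A jc(1) by simp
      show "?L (Node ks cs) ! (length P + jc) = 2 * m" using L A jc(1,2) by (simp add: nth_append)
      show "?L (ires_tree (fst (ins m x (Node ks cs)))) =
          take (length P + jc) (?L (Node ks cs)) @ m # m # drop (Suc (length P + jc)) (?L (Node ks cs))"
        using L A jc(1,3) i len
        by (simp add: ins_Node[OF len i_def] leaf_sizes_graft upd_conv_take_nth_drop A_def B_def)
      show "inner_keys (ires_tree (fst (ins m x (Node ks cs)))) =
          take (length P + jc) (inner_keys (Node ks cs)) @ k # drop (length P + jc) (inner_keys (Node ks cs))"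
        using ik PQ(1) jc(4) jc_le i len by (simp add: ins_Node[OF len i_def] inner_keys_graft)
    qed
  qed
qed

lemma inner_keys_subseq: "subseq (inner_keys t) (inorder t)"
proof (induction t)
  case (Node ks cs)
  then have "list_all2 subseq (map inner_keys cs) (map inorder cs)"
    by (auto simp: list_all2_conv_all_nth)
  then show ?case by (simp add: subseq_interleave_mono)
qed

definition order_iso :: "'a::linorder list \<Rightarrow> 'b::linorder list \<Rightarrow> bool" where
  "order_iso X Y \<longleftrightarrow> (\<exists>f. strict_mono_on (set X) f \<and> map f X = Y)"

lemma order_iso_sorted:
  "length X = length Y \<Longrightarrow> sorted_wrt (<) X \<Longrightarrow> sorted_wrt (<) Y \<Longrightarrow> order_iso X Y"
proof (induction X Y rule: list_induct2)
  case Nil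
  then show ?case by (simp add: order_iso_def)
next
  case (Cons a X b Y)
  then obtain g where g: "strict_mono_on (set X) g" "map g X = Y"
    unfolding order_iso_def by auto
  define f where "f z = (if z = a then b else g z)" for z
  have "\<forall>v\<in>set X. a < v" "\<forall>v\<in>set Y. b < v" using Cons.prems by auto
  then have "strict_mono_on (set (a # X)) f" "map f (a # X) = b # Y"
    using g by (auto simp: f_def strict_mono_on_def)
  then show ?case unfolding order_iso_def by (intro exI[of _ f]) simp
qed

lemma order_iso_move:
  assumes "order_iso (take j S @ k # drop j S @ R) (take j S' @ k' # drop j S' @ R')"
    and "length S = length S'"
  shows "order_iso (S @ k # R) (S' @ k' # R')"
proof -
  obtain f where f: "strict_mono_on (set (take j S @ k # drop j S @ R)) f"
    "map f (take j S @ k # drop j S @ R) = take j S' @ k' # drop j S' @ R'"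
    using assms(1) unfolding order_iso_def by blast
  have "set S = set (take j S) \<union> set (drop j S)"
    by (metis append_take_drop_id set_append)
  then have "set (take j S @ k # drop j S @ R) = set (S @ k # R)" by auto
  moreover have "map f (take j S) = take j S'" "f k = k'" "map f (drop j S) = drop j S'" "map f R = R'"
    using f(2) assms(2) by (auto simp: append_eq_append_conv min_def)
  then have "map f (S @ k # R) = S' @ k' # R'"
    by (subst (1 2) append_take_drop_id[symmetric, of _ j]) (simp del: append_take_drop_id)
  ultimately show ?thesis using f(1) unfolding order_iso_def by auto
qed

lemma std_order_iso: "order_iso X Y \<Longrightarrow> std X = std Y"
proof -
  assume "order_iso X Y"
  then obtain f where f: "strict_mono_on (set X) f" "map f X = Y"
    unfolding order_iso_def by blast
  have "card {y \<in> set Y. y \<le> f x} = card {y \<in> set X. y \<le> x}" if "x \<in> set X" for x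
  proof -
    have "{y \<in> set Y. y \<le> f x} = f ` {y \<in> set X. y \<le> x}"
      using that strict_mono_on_less_eq[OF f(1)] f(2) by auto
    moreover have "inj_on f {y \<in> set X. y \<le> x}"
      using strict_mono_on_imp_inj_on[OF f(1)] by (rule inj_on_subset) auto
    ultimately show ?thesis by (simp add: card_image)
  qed
  then show ?thesis unfolding std_def f(2)[symmetric] by simp
qed

text \<open>For m = 0 a split would turn a leaf size 0 into 0, 0 and not reveal its position.\<close>

lemma split_position_unique:
  assumes "0 < (m::nat)" "j < length L" "j' < length L" "L ! j = 2 * m" "L ! j' = 2 * m"
    and "take j L @ m # m # drop (Suc j) L = take j' L @ m # m # drop (Suc j') L"
  shows "j = j'"
proof (rule ccontr)
  let ?L' = "\<lambda>j. take j L @ m # m # drop (Suc j) L"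
  have at_split: "?L' j ! j = m" if "j < length L" for j using that by (simp add: nth_append)
  have off_split: "?L' j ! i = 2 * m" if "i < j" "j < length L" "L ! i = 2 * m" for i j
    using that by (simp add: nth_append)
  assume "j \<noteq> j'"
  then consider "j < j'" | "j' < j" by linarith
  then show False
  proof cases
    case 1
    have "?L' j ! j = ?L' j' ! j" using assms(6) by (rule arg_cong)
    then show False using at_split[OF assms(2)] off_split[OF 1 assms(3,4)] assms(1) by simp
  next
    case 2
    have "?L' j' ! j' = ?L' j ! j'" using assms(6) by (rule arg_cong[symmetric])
    then show False using at_split[OF assms(3)] off_split[OF 2 assms(2,5)] assms(1) by simp
  qed
qed

lemma insert_key_no_leaf_split:
  "wf_btree m t \<Longrightarrow> snd (insert_key m x t) = None \<Longrightarrow>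
   inner_keys (fst (insert_key m x t)) = inner_keys t \<and>
   length (leaf_sizes (shape (fst (insert_key m x t)))) = length (leaf_sizes (shape t))"
  using ins_no_leaf_split[of m t x] by (force simp: insert_key_eq)

lemma insert_key_leaf_split:
  "wf_btree m t \<Longrightarrow> snd (insert_key m x t) = Some k \<Longrightarrow>
   \<exists>j < length (leaf_sizes (shape t)). leaf_sizes (shape t) ! j = 2 * m \<and>
    leaf_sizes (shape (fst (insert_key m x t))) =
      take j (leaf_sizes (shape t)) @ m # m # drop (Suc j) (leaf_sizes (shape t)) \<and>
    inner_keys (fst (insert_key m x t)) = take j (inner_keys t) @ k # drop j (inner_keys t)"
  using ins_leaf_split[of m t x k] by (simp add: insert_key_eq)

lemma insert_key_same_shape:
  assumes "0 < m" "wf_btree m t" "wf_btree m u" "shape t = shape u"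
    and "shape (fst (insert_key m x t)) = shape (fst (insert_key m y u))"
  shows "snd (insert_key m x t) = None \<and> snd (insert_key m y u) = None \<and>
           inner_keys (fst (insert_key m x t)) = inner_keys t \<and>
           inner_keys (fst (insert_key m y u)) = inner_keys u
         \<or> (\<exists>j k k'. snd (insert_key m x t) = Some k \<and> snd (insert_key m y u) = Some k' \<and>
           inner_keys (fst (insert_key m x t)) = take j (inner_keys t) @ k # drop j (inner_keys t) \<and>
           inner_keys (fst (insert_key m y u)) = take j (inner_keys u) @ k' # drop j (inner_keys u))"
proof -
  let ?L = "\<lambda>t. leaf_sizes (shape t)"
  have L: "?L t = ?L u" "?L (fst (insert_key m x t)) = ?L (fst (insert_key m y u))"
    using assms(4,5) by simp_all
  have grows: "length (?L (fst (insert_key m z v))) = Suc (length (?L v))"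
    if "wf_btree m v" "snd (insert_key m z v) = Some k" for z v k
    using insert_key_leaf_split[OF that] by auto
  show ?thesis
  proof (cases "snd (insert_key m x t)"; cases "snd (insert_key m y u)")
    assume "snd (insert_key m x t) = None" "snd (insert_key m y u) = None"
    then show ?thesis using insert_key_no_leaf_split assms(2,3) by blast
  next
    fix k' assume no: "snd (insert_key m x t) = None" and split: "snd (insert_key m y u) = Some k'"
    then show ?thesis using insert_key_no_leaf_split[OF assms(2) no] grows[OF assms(3) split] L by simp
  next
    fix k assume split: "snd (insert_key m x t) = Some k" and no: "snd (insert_key m y u) = None"
    then show ?thesis using insert_key_no_leaf_split[OF assms(3) no] grows[OF assms(2) split] L by simp
  next
    fix k k' assume split: "snd (insert_key m x t) = Some k" "snd (insert_key m y u) = Some k'"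
    with insert_key_leaf_split[OF assms(2)] insert_key_leaf_split[OF assms(3)] obtain j j' where
      "j < length (?L t)" "?L t ! j = 2 * m"
      "?L (fst (insert_key m x t)) = take j (?L t) @ m # m # drop (Suc j) (?L t)"
      "inner_keys (fst (insert_key m x t)) = take j (inner_keys t) @ k # drop j (inner_keys t)"
      "j' < length (?L u)" "?L u ! j' = 2 * m"
      "?L (fst (insert_key m y u)) = take j' (?L u) @ m # m # drop (Suc j') (?L u)"
      "inner_keys (fst (insert_key m y u)) = take j' (inner_keys u) @ k' # drop j' (inner_keys u)"
      by blast
    moreover from this have "j = j'" using split_position_unique[OF assms(1)] L by metis
    ultimately show ?thesis using split by blast
  qed
qed

definition split_medians :: "nat \<Rightarrow> btree \<Rightarrow> nat list \<Rightarrow> nat list" where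
  "split_medians m t xs = List.map_filter snd (steps m t xs)"

lemma split_medians_Nil [simp]: "split_medians m t [] = []"
  by (simp add: split_medians_def map_filter_simps)

lemma split_medians_Cons:
  "split_medians m t (x # xs) =
     (case snd (insert_key m x t) of None \<Rightarrow> [] | Some k \<Rightarrow> [k]) @ split_medians m (fst (insert_key m x t)) xs"
  by (simp add: split_medians_def steps_Cons map_filter_simps split: option.split)

lemma order_iso_split_medians:
  assumes "0 < m" "wf_btree m t" "wf_btree m u" "shape t = shape u"
    and "sorted_wrt (<) (inorder t)" "sorted_wrt (<) (inorder u)"
    and "distinct xs" "distinct ys" "set xs \<inter> set (inorder t) = {}" "set ys \<inter> set (inorder u) = {}"
    and "map (shape \<circ> fst) (steps m t xs) = map (shape \<circ> fst) (steps m u ys)"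
  shows "order_iso (inner_keys t @ split_medians m t xs) (inner_keys u @ split_medians m u ys)"
  using assms(2-)
proof (induction xs arbitrary: t u ys)
  case Nil
  then have "ys = []" by (cases ys) (simp_all add: steps_Cons)
  have "length (inner_keys t) = length (inner_keys u)"
    using leaf_count[of m t] leaf_count[of m u] Nil.prems(1-3) by simp
  moreover have "sorted_wrt (<) (inner_keys t)" "sorted_wrt (<) (inner_keys u)"
    using Nil.prems(4,5) inner_keys_subseq sorted_wrt_subseq by blast+
  ultimately show ?case using \<open>ys = []\<close> by (simp add: order_iso_sorted)
next
  case (Cons x xs)
  obtain y ys' where ys: "ys = y # ys'" using Cons.prems(10) by (cases ys) (auto simp: steps_Cons)
  define t' where "t' = fst (insert_key m x t)"
  define u' where "u' = fst (insert_key m y u)"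
  have inv_t: "wf_btree m t'" "inorder t' = insort x (inorder t)" "sorted_wrt (<) (inorder t')"
    using insert_key_invariants[of m t x] Cons.prems unfolding t'_def by auto
  have inv_u: "wf_btree m u'" "inorder u' = insort y (inorder u)" "sorted_wrt (<) (inorder u')"
    using insert_key_invariants[of m u y] Cons.prems ys unfolding u'_def by auto
  have hist: "shape t' = shape u'" "map (shape \<circ> fst) (steps m t' xs) = map (shape \<circ> fst) (steps m u' ys')"
    using Cons.prems(10) ys by (simp_all add: steps_Cons t'_def u'_def comp_def)
  have IH: "order_iso (inner_keys t' @ split_medians m t' xs) (inner_keys u' @ split_medians m u' ys')"
    by (rule Cons.IH) (use hist inv_t inv_u Cons.prems ys in \<open>auto simp: set_insort_key comp_def\<close>)
  have "length (inner_keys t) = length (inner_keys u)"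
    using leaf_count[of m t] leaf_count[of m u] Cons.prems(1-3) by simp
  then show ?case
    using insert_key_same_shape[OF assms(1) Cons.prems(1-3), of x y] hist(1) IH order_iso_move
    by (auto simp: ys split_medians_Cons t'_def u'_def)
qed

abbreviation insert_all :: "nat \<Rightarrow> btree \<Rightarrow> nat list \<Rightarrow> btree" where
  "insert_all m t xs \<equiv> foldl (\<lambda>t x. fst (insert_key m x t)) t xs"

fun map_keys :: "(nat \<Rightarrow> nat) \<Rightarrow> btree \<Rightarrow> btree" where
  "map_keys f (Node ks cs) = Node (map f ks) (map (map_keys f) cs)"

fun map_ires :: "(nat \<Rightarrow> nat) \<Rightarrow> ires \<Rightarrow> ires" where
  "map_ires f (Fit t) = Fit (map_keys f t)"
| "map_ires f (Split l k r) = Split (map_keys f l) (f k) (map_keys f r)"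

lemma shape_map_keys: "shape (map_keys f t) = shape t"
  by (induction t) (auto cong: map_cong)

lemma insort_map_strict_mono:
  "strict_mono_on (insert x (set ks)) f \<Longrightarrow> insort (f x) (map f ks) = map f (insort x ks)"
proof (induction ks)
  case (Cons a ks)
  then have "f x \<le> f a \<longleftrightarrow> x \<le> a" by (simp add: strict_mono_on_less_eq)
  moreover have "strict_mono_on (insert x (set ks)) f"
    using Cons.prems by (rule monotone_on_subset) auto
  ultimately show ?case using Cons.IH by simp
qed simp

lemma split_node_map_keys: "split_node m (map f ks) (map (map_keys f) cs) = map_ires f (split_node m ks cs)"
  by (simp add: split_node_def take_map drop_map)

lemma graft_map_keys:
  "graft m (map f ks) (map (map_keys f) cs) i (map_ires f r) = map_ires f (graft m ks cs i r)"
  by (cases r) (simp_all add: graft_def map_update take_map drop_map flip: split_node_map_keys)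

lemma ins_map_keys:
  "wf_btree m t \<Longrightarrow> strict_mono_on (insert x (set (inorder t))) f \<Longrightarrow>
   ins m (f x) (map_keys f t) = (map_ires f (fst (ins m x t)), map_option f (snd (ins m x t)))"
proof (induction t arbitrary: x)
  case (Node ks cs)
  show ?case
  proof (cases "cs = []")
    case True
    then have "strict_mono_on (insert x (set ks)) f" using Node.prems by simp
    then show ?thesis
      using True insort_map_strict_mono[of x ks f] split_node_map_keys[of m f "insort x ks" "[]"]
      by (simp add: ins_Leaf)
  next
    case False
    define i where "i = length (filter (\<lambda>k. k < x) ks)"
    have len: "length cs = Suc (length ks)" and wf: "\<forall>c\<in>set cs. wf_btree m c"
      using Node.prems False by auto
    have i: "i < length cs" unfolding i_def using len by (rule child_index_less)
    have "cs ! i \<in> set cs" using i by simp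
    then have keys: "insert x (set ks \<union> set (inorder (cs ! i))) \<subseteq> insert x (set (inorder (Node ks cs)))"
      using False len by (auto simp: set_interleave)
    have "filter (\<lambda>k. k < f x) (map f ks) = map f (filter (\<lambda>k. k < x) ks)"
      using strict_mono_on_less[OF monotone_on_subset[OF Node.prems(2) keys]]
      by (auto simp: filter_map comp_def intro!: arg_cong[where f = "map f"] filter_cong)
    then have i': "i = length (filter (\<lambda>k. k < f x) (map f ks))" by (simp add: i_def)
    have "strict_mono_on (insert x (set (inorder (cs ! i)))) f"
      using keys by (intro monotone_on_subset[OF Node.prems(2)]) blast
    then have "ins m (f x) (map_keys f (cs ! i)) =
        (map_ires f (fst (ins m x (cs ! i))), map_option f (snd (ins m x (cs ! i))))"
      using Node.IH i wf by simp
    then show ?thesis using len i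
      by (simp add: ins_Node[OF len i_def] ins_Node[OF _ i'] graft_map_keys)
  qed
qed

lemma insert_key_map_keys:
  "wf_btree m t \<Longrightarrow> strict_mono_on (insert x (set (inorder t))) f \<Longrightarrow>
   fst (insert_key m (f x) (map_keys f t)) = map_keys f (fst (insert_key m x t))"
  by (cases "fst (ins m x t)") (simp_all add: insert_key_eq ins_map_keys)

lemma insert_all_map_keys:
  "wf_btree m t \<Longrightarrow> strict_mono_on (set xs \<union> set (inorder t)) f \<Longrightarrow>
   insert_all m (map_keys f t) (map f xs) = map_keys f (insert_all m t xs)"
proof (induction xs arbitrary: t)
  case (Cons x xs)
  have "strict_mono_on (insert x (set (inorder t))) f"
    using Cons.prems(2) by (rule monotone_on_subset) auto
  moreover have "strict_mono_on (set xs \<union> set (inorder (fst (insert_key m x t)))) f"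
    using set_inorder_ins[OF Cons.prems(1), of x]
    by (intro monotone_on_subset[OF Cons.prems(2)]) (auto simp: insert_key_eq)
  ultimately show ?case
    using Cons.IH Cons.prems(1) by (simp add: insert_key_map_keys wf_btree_insert_key)
qed simp

lemma strict_mono_on_std_rank:
  fixes xs :: "nat list"
  shows "strict_mono_on (set xs) (\<lambda>x. card {y \<in> set xs. y \<le> x})"
proof (rule strict_mono_onI)
  fix a b assume "a \<in> set xs" "b \<in> set xs" "a < b"
  then have "{y \<in> set xs. y \<le> a} \<subset> {y \<in> set xs. y \<le> b}" by force
  then show "card {y \<in> set xs. y \<le> a} < card {y \<in> set xs. y \<le> b}" by (simp add: psubset_card_mono)
qed

lemma shape_insert_all_std:
  "shape (insert_all m (Node [] []) (std xs)) = shape (insert_all m (Node [] []) xs)"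
proof -
  let ?f = "\<lambda>x. card {y \<in> set xs. y \<le> x}"
  have "insert_all m (Node [] []) (std xs) = insert_all m (map_keys ?f (Node [] [])) (map ?f xs)"
    by (simp add: std_def)
  also have "\<dots> = map_keys ?f (insert_all m (Node [] []) xs)"
    using strict_mono_on_std_rank[of xs] by (intro insert_all_map_keys) simp_all
  finally show ?thesis by (simp add: shape_map_keys)
qed

fun prune_ires :: "ires \<Rightarrow> ires" where
  "prune_ires (Fit t) = Fit (prune t)"
| "prune_ires (Split l k r) = Split (prune l) k (prune r)"

lemma leaf_if_balanced_0: "balanced 0 t \<Longrightarrow> is_leaf t"
  by (cases t) simp

lemma not_leaf_if_balanced_Suc: "balanced (Suc h) t \<Longrightarrow> \<not> is_leaf t"
  by (cases t) simp

lemma prune_Node_leaves: "\<forall>c\<in>set cs. is_leaf c \<Longrightarrow> prune (Node ks cs) = Node ks []"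
  by (simp add: filter_False)

lemma prune_Node_non_leaves: "\<forall>c\<in>set cs. \<not> is_leaf c \<Longrightarrow> prune (Node ks cs) = Node ks (map prune cs)"
  by (simp add: filter_True)

lemma prune_split_node_leaves:
  "\<forall>c\<in>set cs. is_leaf c \<Longrightarrow> prune_ires (split_node m ks cs) = split_node m ks []"
  by (auto simp: split_node_def filter_empty_conv dest: in_set_takeD in_set_dropD)

lemma prune_split_node_non_leaves:
  assumes "\<forall>c\<in>set cs. \<not> is_leaf c"
  shows "prune_ires (split_node m ks cs) = split_node m ks (map prune cs)"
proof -
  have "\<forall>c\<in>set (take (Suc m) cs). \<not> is_leaf c" "\<forall>c\<in>set (drop (Suc m) cs). \<not> is_leaf c"
    using assms by (auto dest: in_set_takeD in_set_dropD)
  then show ?thesis using assms by (simp add: split_node_def prune_Node_non_leaves take_map drop_map)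
qed

lemma prune_graft:
  assumes "\<forall>c\<in>set cs. \<not> is_leaf c" "ires_all (\<lambda>t. \<not> is_leaf t) r"
  shows "prune_ires (graft m ks cs i r) = graft m ks (map prune cs) i (prune_ires r)"
proof (cases r)
  case (Fit c)
  then have "\<forall>c'\<in>set (cs[i := c]). \<not> is_leaf c'"
    using assms by (auto dest: set_update_subset_insert[THEN subsetD])
  then show ?thesis using Fit by (simp add: graft_def map_update prune_Node_non_leaves)
next
  case (Split l k r')
  then have "\<forall>c\<in>set (take i cs @ l # r' # drop (Suc i) cs). \<not> is_leaf c"
    using assms by (auto dest: in_set_takeD in_set_dropD)
  then show ?thesis using Split by (simp add: graft_def take_map drop_map prune_split_node_non_leaves)
qed

lemma insort_eq_take_drop:
  "sorted ks \<Longrightarrow> insort (k::'a::linorder) ks =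
     take (length (filter (\<lambda>y. y < k) ks)) ks @ k # drop (length (filter (\<lambda>y. y < k) ks)) ks"
proof (induction ks)
  case (Cons a ks)
  show ?case
  proof (cases "k \<le> a")
    case True
    then have "filter (\<lambda>y. y < k) (a # ks) = []" using Cons.prems by (auto simp: filter_empty_conv)
    then show ?thesis using True by simp
  qed (use Cons in simp)
qed simp

text \<open>The median lies in the subtree the new key descended into, so in T^(1) it descends the same way.\<close>

lemma median_child_index:
  assumes "wf_btree m (Node ks cs)" "cs \<noteq> []" "sorted_wrt (<) (inorder (Node ks cs))"
    and i_def: "i = length (filter (\<lambda>k. k < x) ks)" and "snd (ins m x (cs ! i)) = Some k"
  shows "length (filter (\<lambda>y. y < k) ks) = i"
proof -
  have len: "length cs = Suc (length ks)" and i: "i < length cs"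
    using assms(1,2) child_index_less[of cs ks] by (auto simp: i_def)
  then have "k \<in> insert x (set (inorder (cs ! i)))"
    using median_mem_ins[OF _ assms(5)] assms(1,2) by simp
  then show ?thesis
    using length_filter_less_interleave[of "map inorder cs" ks i k] assms(2,3) len i
    by (auto simp: i_def)
qed

lemma ins_prune_height_one:
  assumes "wf_btree m (Node ks cs)" "cs \<noteq> []" "\<forall>c\<in>set cs. is_leaf c"
    and "sorted_wrt (<) (inorder (Node ks cs))"
  shows "prune_ires (fst (ins m x (Node ks cs))) =
           (case snd (ins m x (Node ks cs)) of None \<Rightarrow> Fit (Node ks []) | Some k \<Rightarrow> fst (ins m k (Node ks [])))"
proof -
  define i where "i = length (filter (\<lambda>k. k < x) ks)"
  have len: "length cs = Suc (length ks)" using assms(1,2) by simp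
  have i: "i < length cs" unfolding i_def using len by (rule child_index_less)
  then have "is_leaf (cs ! i)" using assms(3) by simp
  then obtain cks where c: "cs ! i = Node cks []" by (cases "cs ! i") simp
  let ?cks' = "insort x cks"
  show ?thesis
  proof (cases "2 * m < length ?cks'")
    case False
    have "\<forall>c\<in>set (cs[i := Node ?cks' []]). is_leaf c"
      using assms(3) by (auto dest: set_update_subset_insert[THEN subsetD])
    then show ?thesis using False c
      by (simp add: ins_Node[OF len i_def] ins_Leaf split_node_def graft_def prune_Node_leaves)
  next
    case True
    let ?k = "?cks' ! m"
    have r: "ins m x (cs ! i) = (Split (Node (take m ?cks') []) ?k (Node (drop (Suc m) ?cks') []), Some ?k)"
      using True c by (simp add: ins_Leaf split_node_def)
    have "length (filter (\<lambda>y. y < ?k) ks) = i"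
      using median_child_index[OF assms(1,2,4) i_def] r by simp
    moreover have "sorted ks"
      using sorted_wrt_interleave[of "(<)" "map inorder cs" ks] assms(2,4) len
      by (simp add: strict_sorted_iff)
    ultimately have "insort ?k ks = take i ks @ ?k # drop i ks"
      using insort_eq_take_drop[of ks ?k] by simp
    moreover have "\<forall>c\<in>set (take i cs @ Node (take m ?cks') [] # Node (drop (Suc m) ?cks') [] # drop (Suc i) cs).
        is_leaf c"
      using assms(3) by (auto dest: in_set_takeD in_set_dropD)
    ultimately show ?thesis using r
      by (simp add: ins_Node[OF len i_def] ins_Leaf graft_def prune_split_node_leaves)
  qed
qed

lemma ins_prune:
  "wf_btree m t \<Longrightarrow> balanced (Suc h) t \<Longrightarrow> sorted_wrt (<) (inorder t) \<Longrightarrow>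
   prune_ires (fst (ins m x t)) =
     (case snd (ins m x t) of None \<Rightarrow> Fit (prune t) | Some k \<Rightarrow> fst (ins m k (prune t)))"
proof (induction h arbitrary: t x)
  case 0
  then obtain ks cs where t: "t = Node ks cs" "cs \<noteq> []" "\<forall>c\<in>set cs. is_leaf c"
    by (cases t) (auto simp: leaf_if_balanced_0)
  have "wf_btree m (Node ks cs)" "sorted_wrt (<) (inorder (Node ks cs))"
    using "0.prems" unfolding t(1) by auto
  then show ?case
    unfolding t(1) prune_Node_leaves[OF t(3)] using ins_prune_height_one[of m ks cs x] t(2,3) by simp
next
  case (Suc h)
  then obtain ks cs where t: "t = Node ks cs" "cs \<noteq> []" and bal: "\<forall>c\<in>set cs. balanced (Suc h) c"
    by (cases t) auto
  then have non_leaves: "\<forall>c\<in>set cs. \<not> is_leaf c" using not_leaf_if_balanced_Suc by blast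
  define i where "i = length (filter (\<lambda>k. k < x) ks)"
  have len: "length cs = Suc (length ks)" and wf: "\<forall>c\<in>set cs. wf_btree m c"
    using Suc.prems t by auto
  have i: "i < length cs" unfolding i_def using len by (rule child_index_less)
  have sorted: "sorted_wrt (<) (inorder (cs ! i))"
    using sorted_wrt_interleave[of "(<)" "map inorder cs" ks] Suc.prems(3) t len i by simp
  let ?r = "fst (ins m x (cs ! i))"
  have IH: "prune_ires ?r =
      (case snd (ins m x (cs ! i)) of None \<Rightarrow> Fit (prune (cs ! i)) | Some k \<Rightarrow> fst (ins m k (prune (cs ! i))))"
    using Suc.IH wf bal sorted i by simp
  have "ires_all (balanced (Suc h)) ?r" using ins_balanced wf bal i by simp
  then have "ires_all (\<lambda>t. \<not> is_leaf t) ?r"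
    by (cases ?r) (auto simp: not_leaf_if_balanced_Suc)
  then have pr: "prune_ires (fst (ins m x t)) = graft m ks (map prune cs) i (prune_ires ?r)"
    using non_leaves t len by (simp add: ins_Node[OF len i_def] prune_graft)
  have pt: "prune t = Node ks (map prune cs)" using t non_leaves by (simp add: prune_Node_non_leaves)
  show ?case
  proof (cases "snd (ins m x (cs ! i))")
    case None
    then show ?thesis using pr pt IH i t by (simp add: ins_Node[OF len i_def] graft_def list_update_id map_update[symmetric])
  next
    case (Some k)
    have "length (filter (\<lambda>y. y < k) ks) = i"
      using median_child_index[of m ks cs i x k] Suc.prems t i_def Some by simp
    then have "ins m k (prune t) = (graft m ks (map prune cs) i (fst (ins m k (prune (cs ! i)))),
        snd (ins m k (prune (cs ! i))))"
      unfolding pt using ins_Node[of "map prune cs" ks i k m] len i by simp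
    then show ?thesis using pr IH Some t by (simp add: ins_Node[OF len i_def])
  qed
qed

text \<open>T^(1) as a function of T: a single leaf has no internal node, whereas prune would keep it.\<close>

definition strip_leaves :: "btree \<Rightarrow> btree" where
  "strip_leaves t = (if is_leaf t then Node [] [] else prune t)"

lemma prune_ires_tree: "ires_all (\<lambda>t. \<not> is_leaf t) r \<Longrightarrow> prune (ires_tree r) = ires_tree (prune_ires r)"
  by (cases r) auto

lemma strip_leaves_insert_key:
  assumes "0 < m" "wf_btree m t" "balanced h t" "sorted_wrt (<) (inorder t)"
  shows "strip_leaves (fst (insert_key m x t)) =
    (case snd (insert_key m x t) of None \<Rightarrow> strip_leaves t | Some k \<Rightarrow> fst (insert_key m k (strip_leaves t)))"
proof (cases h)
  case 0
  then obtain ks where "t = Node ks []" using assms(3) by (cases t) auto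
  then show ?thesis using assms(1)
    by (simp add: insert_key_eq ins_Leaf split_node_def strip_leaves_def)
next
  case (Suc h')
  let ?r = "fst (ins m x t)"
  have "ires_all (balanced (Suc h')) ?r" using ins_balanced assms(2,3) Suc by blast
  then have non_leaves: "ires_all (\<lambda>t. \<not> is_leaf t) ?r"
    by (cases ?r) (auto simp: not_leaf_if_balanced_Suc)
  moreover have "\<not> is_leaf (ires_tree ?r)" using non_leaves by (cases ?r) auto
  moreover have "\<not> is_leaf t" using assms(3) Suc by (simp add: not_leaf_if_balanced_Suc)
  ultimately show ?thesis
    using ins_prune[OF assms(2) _ assms(4), of h' x] assms(3) Suc
    by (auto simp: strip_leaves_def insert_key_eq prune_ires_tree split: option.split)
qed

lemma strip_leaves_insert_all:
  assumes "0 < m" "wf_btree m t" "balanced h t" "sorted_wrt (<) (inorder t)"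
    and "distinct xs" "set xs \<inter> set (inorder t) = {}"
  shows "strip_leaves (insert_all m t xs) = insert_all m (strip_leaves t) (split_medians m t xs)"
  using assms(2-)
proof (induction xs arbitrary: t h)
  case (Cons x xs)
  let ?t' = "fst (insert_key m x t)"
  have inv: "wf_btree m ?t'" "inorder ?t' = insort x (inorder t)" "sorted_wrt (<) (inorder ?t')"
    using insert_key_invariants[of m t x] Cons.prems by auto
  obtain h' where "balanced h' ?t'" using balanced_insert_key Cons.prems(1,2) by blast
  then have "strip_leaves (insert_all m ?t' xs) = insert_all m (strip_leaves ?t') (split_medians m ?t' xs)"
    using Cons.IH inv Cons.prems by (auto simp: set_insort_key)
  then show ?case
    using strip_leaves_insert_key[OF assms(1) Cons.prems(1-3), of x]
    by (auto simp: split_medians_Cons split: option.split)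
qed simp

theorem lemma3p1:
  fixes m n :: nat and p p' :: "nat list"
  assumes "m \<ge> 1"
    and "is_perm n p" and "is_perm n p'"
    and "height (final_tree m p) \<ge> 1"
    and "history m p = history m p'"
  shows "pi1 m p = pi1 m p' \<and>
         shape (final_tree m (pi1 m p)) = shape (prune (final_tree m p))"
proof -
  have m: "0 < m" and distinct: "distinct p" "distinct p'"
    using assms(1-3) by (auto simp: is_perm_def)
  have "order_iso (leaf_medians m p) (leaf_medians m p')"
    using order_iso_split_medians[of m "Node [] []" "Node [] []" p p'] m distinct assms(5)
    by (simp add: leaf_medians_def split_medians_def history_def)
  then have "pi1 m p = pi1 m p'" by (simp add: pi1_def std_order_iso)
  moreover have "strip_leaves (final_tree m p) = final_tree m (leaf_medians m p)"
    using strip_leaves_insert_all[of m "Node [] []" 0 p] m distinct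
    by (simp add: final_tree_def leaf_medians_def split_medians_def strip_leaves_def)
  moreover have "\<not> is_leaf (final_tree m p)"
    using assms(4) by (cases "final_tree m p") (auto split: if_splits)
  ultimately show ?thesis
    using shape_insert_all_std[of m "leaf_medians m p"] by (simp add: pi1_def final_tree_def strip_leaves_def)
qed

end
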